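(* Let $U=\sum_{j=0}^3c_j\sigma_j\otimes\sigma_j$ be a normalized two-qubit unitary with parameters $x=\pi/4$ and $y=z$. Write $E(\alpha,\beta):=E(\varphi(\alpha,\beta;\frac{\pi}{2},\frac{\pi}{2}))$. Then $$\max_{\alpha\in[0,\pi/4],\ \beta\in[0,\pi/2]}E(\alpha,\beta)=E(\tfrac{\pi}{4},\tfrac{\pi}{4})=H(|c_0|^2,|c_0|^2,|c_2|^2,|c_2|^2).$$
   Context: Pauli matrices: $\sigma_0=I$, $\sigma_1=\begin{pmatrix}0&1\\1&0\end{pmatrix}$, $\sigma_2=\begin{pmatrix}0&-i\\i&0\end{pmatrix}$, $\sigma_3=\begin{pmatrix}1&0\\0&-1\end{pmatrix}$. For real $x,y,z$ set $c_0=\cos x\cos y\cos z+i\sin x\sin y\sin z$, $c_1=\cos x\sin y\sin z+i\sin x\cos y\cos z$, $c_2=\sin x\cos y\sin z+i\cos x\sin y\cos z$, $c_3=\sin x\sin y\cos z+i\cos x\cos y\sin z$, and $U=\sum_{j=0}^3c_j\sigma_j\otimes\sigma_j$ acting on qubits $A,B$. $U$ is called normalized if $\pi/4\ge x\ge y\ge z\ge0$ and $0<y<\pi/4$. $E(\varphi(\alpha,\beta;\frac{\pi}{2},\frac{\pi}{2}))$ denotes the entanglement entropy $S(\mathrm{Tr}_{AR_A}|\chi\rangle\langle\chi|)$ (von Neumann entropy, base-2 logarithm) of $|\chi\rangle=U\big((\cos\alpha|00\rangle+\sin\alpha|11\rangle)_{AR_A}\otimes(\cos\beta|00\rangle+\sin\beta|11\rangle)_{BR_B}\big)$,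 with $R_A,R_B$ qubits. $H$ is the base-2 Shannon entropy. *)

theory Defs
  imports "Jordan_Normal_Form.Char_Poly" "HOL-Computational_Algebra.Polynomial"
begin

definition pauli :: "nat \<Rightarrow> nat \<Rightarrow> nat \<Rightarrow> complex" where
  "pauli j r s =
     (if j = 0 then (if r = s then 1 else 0)
      else if j = 1 then (if r \<noteq> s then 1 else 0)
      else if j = 2 then (if r = 0 \<and> s = 1 then - \<i> else if r = 1 \<and> s = 0 then \<i> else 0)
      else (if r = s then (if r = 0 then 1 else -1) else 0))"

definition coef :: "real \<Rightarrow> real \<Rightarrow> real \<Rightarrow> nat \<Rightarrow> complex" where
  "coef x y z j =
     (if j = 0 then Complex (cos x * cos y * cos z) (sin x * sin y * sin z)
      else if j = 1 then Complex (cos x * sin y * sin z) (sin x * cos y * cos z)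
      else if j = 2 then Complex (sin x * cos y * sin z) (cos x * sin y * cos z)
      else Complex (sin x * sin y * cos z) (cos x * cos y * sin z))"

text \<open>Matrix entry of U = sum_j c_j sigma_j (x) sigma_j, row (a',b'), column (a,b).\<close>
definition Uent :: "real \<Rightarrow> real \<Rightarrow> real \<Rightarrow> nat \<Rightarrow> nat \<Rightarrow> nat \<Rightarrow> nat \<Rightarrow> complex" where
  "Uent x y z a' b' a b = (\<Sum>j<4. coef x y z j * pauli j a' a * pauli j b' b)"

definition normalized :: "real \<Rightarrow> real \<Rightarrow> real \<Rightarrow> bool" where
  "normalized x y z \<longleftrightarrow> pi/4 \<ge> x \<and> x \<ge> y \<and> y \<ge> z \<and> z \<ge> 0 \<and> 0 < y \<and> y < pi/4"

definition pstate :: "real \<Rightarrow> nat \<Rightarrow> nat \<Rightarrow> complex" where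
  "pstate t q r = (if q = 0 \<and> r = 0 then complex_of_real (cos t)
                   else if q = 1 \<and> r = 1 then complex_of_real (sin t) else 0)"

text \<open>Amplitude of chi = U (psi_alpha (x) psi_beta) at basis state |a, ra>_{A R_A} |b, rb>_{B R_B}.\<close>
definition chi :: "real \<Rightarrow> real \<Rightarrow> real \<Rightarrow> real \<Rightarrow> real \<Rightarrow> nat \<Rightarrow> nat \<Rightarrow> nat \<Rightarrow> nat \<Rightarrow> complex" where
  "chi x y z \<alpha> \<beta> a ra b rb =
     (\<Sum>a0<2. \<Sum>b0<2. Uent x y z a b a0 b0 * pstate \<alpha> a0 ra * pstate \<beta> b0 rb)"

text \<open>Reduced density matrix Tr_{A R_A} |chi><chi| on B R_B; index i encodes (b, rb) as 2*b + rb.\<close>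
definition rhoBR :: "real \<Rightarrow> real \<Rightarrow> real \<Rightarrow> real \<Rightarrow> real \<Rightarrow> complex mat" where
  "rhoBR x y z \<alpha> \<beta> = mat 4 4 (\<lambda>(i, k).
     \<Sum>a<2. \<Sum>ra<2. chi x y z \<alpha> \<beta> a ra (i div 2) (i mod 2) * cnj (chi x y z \<alpha> \<beta> a ra (k div 2) (k mod 2)))"

text \<open>Von Neumann entropy (base 2): eigenvalues with multiplicity are the roots of the
  characteristic polynomial; 0 log 0 = 0 holds since log 2 0 = 0 in Isabelle.\<close>
definition vn_entropy :: "complex mat \<Rightarrow> real" where
  "vn_entropy \<rho> = - sum_mset (image_mset (\<lambda>e. Re e * log 2 (Re e)) (proots (char_poly \<rho>)))"

definition ent :: "real \<Rightarrow> real \<Rightarrow> real \<Rightarrow> real \<Rightarrow> real \<Rightarrow> real" where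
  "ent x y z \<alpha> \<beta> = vn_entropy (rhoBR x y z \<alpha> \<beta>)"

definition shannon :: "real list \<Rightarrow> real" where
  "shannon ps = - (\<Sum>p\<leftarrow>ps. p * log 2 p)"

end

theory Submission
  imports Defs
begin

text \<open>The reduced state on B R_B is supported on the two blocks spanned by |00>, |11> and by
  |01>, |10>, so its spectrum consists of the roots of two monic quadratics. For x = pi/4, y = z
  and t = sin 2y their traces are (1 +- t cos 2a cos 2b)/2 and their common determinant is
  (sin 2a sin 2b)^2 t^2 (2 - t^2)/16. Gibbs' inequality against the distribution (A, B, A, B),
  with A = |c_0|^2 and B = |c_2|^2, bounds the entropy by H(A, A, B, B) as soon as the two smaller
  eigenvalues sum to at most 2B; this is a discriminant estimate resting on
  |sin 2a sin 2b| + |cos 2a cos 2b| <= 1. At a = b = pi/4 both quadratics have the roots A and B.\<close>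

lemma sum_lessThan_2: "(\<Sum>i<2. f i) = f 0 + f (1::nat)"
  by (simp add: numeral_eq_Suc)

lemma sum_lessThan_4: "(\<Sum>i<4. f i) = f 0 + f 1 + f 2 + f (3::nat)"
  by (simp add: numeral_eq_Suc)

lemma det_mat_Suc:
  fixes f :: "nat \<times> nat \<Rightarrow> 'a::comm_ring_1"
  shows "det (mat (Suc n) (Suc n) f) =
    (\<Sum>j<Suc n. f (0, j) * (-1) ^ j *
       det (mat n n (\<lambda>(i', j'). f (Suc i', if j' < j then j' else Suc j'))))"
proof -
  have "mat_delete (mat (Suc n) (Suc n) f) 0 j =
      mat n n (\<lambda>(i', j'). f (Suc i', if j' < j then j' else Suc j'))" for j
    unfolding mat_delete_def by (rule eq_matI) auto
  then show ?thesis
    by (subst laplace_expansion_row[of _ "Suc n" 0]) (auto simp: cofactor_def mult.assoc)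
qed

lemma det_mat4_two_blocks:
  fixes f :: "nat \<times> nat \<Rightarrow> 'a::comm_ring_1"
  assumes "f (0,1) = 0" "f (0,2) = 0" "f (1,0) = 0" "f (2,0) = 0"
    and "f (1,3) = 0" "f (3,1) = 0" "f (2,3) = 0" "f (3,2) = 0"
  shows "det (mat 4 4 f) = (f (0,0) * f (3,3) - f (0,3) * f (3,0)) * (f (1,1) * f (2,2) - f (1,2) * f (2,1))"
  using assms by (simp add: numeral_eq_Suc det_mat_Suc algebra_simps)

lemma char_poly_mat4_two_blocks:
  fixes M :: "'a::comm_ring_1 mat"
  assumes M: "M \<in> carrier_mat 4 4"
    and "M $$ (0,1) = 0" "M $$ (0,2) = 0" "M $$ (1,0) = 0" "M $$ (2,0) = 0"
    and "M $$ (1,3) = 0" "M $$ (3,1) = 0" "M $$ (2,3) = 0" "M $$ (3,2) = 0"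
  shows "char_poly M =
    [:M $$ (0,0) * M $$ (3,3) - M $$ (0,3) * M $$ (3,0), - (M $$ (0,0) + M $$ (3,3)), 1:] *
    [:M $$ (1,1) * M $$ (2,2) - M $$ (1,2) * M $$ (2,1), - (M $$ (1,1) + M $$ (2,2)), 1:]"
proof -
  let ?g = "\<lambda>(i, k). (if i = k then [:0, 1:] else 0) + [:- M $$ (i, k):]"
  have "char_poly_matrix M = mat 4 4 ?g"
    using M unfolding char_poly_matrix_def by (intro eq_matI) auto
  then have "char_poly M = det (mat 4 4 ?g)"
    unfolding char_poly_def by simp
  also have "\<dots> = (?g (0,0) * ?g (3,3) - ?g (0,3) * ?g (3,0)) * (?g (1,1) * ?g (2,2) - ?g (1,2) * ?g (2,1))"
    by (rule det_mat4_two_blocks) (simp_all add: assms(2-)[unfolded One_nat_def])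
  finally show ?thesis
    by (simp add: algebra_simps)
qed

definition quad_root_plus :: "real \<Rightarrow> real \<Rightarrow> real" where
  "quad_root_plus T D = (T + sqrt (T\<^sup>2 - 4 * D)) / 2"

definition quad_root_minus :: "real \<Rightarrow> real \<Rightarrow> real" where
  "quad_root_minus T D = (T - sqrt (T\<^sup>2 - 4 * D)) / 2"

lemma proots_monic_quadratic:
  assumes "0 \<le> T\<^sup>2 - 4 * D"
  shows "proots [:complex_of_real D, - complex_of_real T, 1:] =
    {#complex_of_real (quad_root_plus T D), complex_of_real (quad_root_minus T D)#}"
proof -
  let ?l = "quad_root_plus T D" and ?m = "quad_root_minus T D"
  have "complex_of_real T = of_real ?l + of_real ?m"
    unfolding quad_root_plus_def quad_root_minus_def of_real_add[symmetric] by (simp add: field_simps)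
  moreover have "complex_of_real D = of_real ?l * of_real ?m"
    using assms unfolding quad_root_plus_def quad_root_minus_def of_real_mult[symmetric]
    by (simp add: field_simps power2_eq_square[symmetric])
  ultimately have factor: "[:complex_of_real D, - complex_of_real T, 1:] =
      [:- complex_of_real ?l, 1:] * [:- complex_of_real ?m, 1:]"
    by (simp add: algebra_simps)
  have "proots ([:- complex_of_real ?l, 1:] * [:- complex_of_real ?m, 1:]) =
      proots [:- complex_of_real ?l, 1:] + proots [:- complex_of_real ?m, 1:]"
    by (rule proots_mult) simp_all
  then show ?thesis
    unfolding factor by simp
qed

lemma quad_roots_nonneg:
  assumes "0 \<le> D" "0 \<le> T" "0 \<le> T\<^sup>2 - 4 * D"
  shows "0 \<le> quad_root_minus T D" "0 \<le> quad_root_plus T D"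
proof -
  have "sqrt (T\<^sup>2 - 4 * D) \<le> sqrt (T\<^sup>2)"
    using assms by (intro real_sqrt_le_mono) simp
  then show "0 \<le> quad_root_minus T D"
    using assms unfolding quad_root_minus_def by simp
  show "0 \<le> quad_root_plus T D"
    using assms unfolding quad_root_plus_def by simp
qed

lemma quad_roots_sum_prod:
  assumes "B \<le> A"
  shows "quad_root_plus (A + B) (A * B) = A" "quad_root_minus (A + B) (A * B) = B"
proof -
  have "(A + B)\<^sup>2 - 4 * (A * B) = (A - B)\<^sup>2"
    by (simp add: power2_eq_square algebra_simps)
  then have "sqrt ((A + B)\<^sup>2 - 4 * (A * B)) = A - B"
    using assms by simp
  then show "quad_root_plus (A + B) (A * B) = A" "quad_root_minus (A + B) (A * B) = B"
    unfolding quad_root_plus_def quad_root_minus_def by simp_all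
qed

lemma vn_entropy_two_quadratic_factors:
  assumes "char_poly \<rho> =
      [:complex_of_real D1, - complex_of_real T1, 1:] * [:complex_of_real D2, - complex_of_real T2, 1:]"
    and "0 \<le> T1\<^sup>2 - 4 * D1" "0 \<le> T2\<^sup>2 - 4 * D2"
  shows "vn_entropy \<rho> =
    - (quad_root_plus T1 D1 * log 2 (quad_root_plus T1 D1) + quad_root_minus T1 D1 * log 2 (quad_root_minus T1 D1)
     + quad_root_plus T2 D2 * log 2 (quad_root_plus T2 D2) + quad_root_minus T2 D2 * log 2 (quad_root_minus T2 D2))"
proof -
  have "proots (char_poly \<rho>) =
      {#complex_of_real (quad_root_plus T1 D1), complex_of_real (quad_root_minus T1 D1)#} +
      {#complex_of_real (quad_root_plus T2 D2), complex_of_real (quad_root_minus T2 D2)#}"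
    unfolding assms(1) proots_monic_quadratic[OF assms(2), symmetric]
      proots_monic_quadratic[OF assms(3), symmetric]
    by (rule proots_mult) simp_all
  then show ?thesis
    by (simp add: vn_entropy_def algebra_simps)
qed

lemma neg_mult_log_le_cross_entropy:
  fixes l m :: real
  assumes "0 \<le> l" "0 < m"
  shows "- (l * log 2 l) \<le> - (l * log 2 m) + (m - l) / ln 2"
proof (cases "l = 0")
  case True
  with assms show ?thesis by simp
next
  case False
  with assms have l: "0 < l" by simp
  have "l * ln (m / l) \<le> l * (m / l - 1)"
    using l assms by (intro mult_left_mono ln_le_minus_one) simp_all
  moreover have "l * ln (m / l) = l * (ln m - ln l)" and "l * (m / l - 1) = m - l"
    using l assms by (simp_all add: ln_div field_simps)
  ultimately have "l * (ln m - ln l) \<le> m - l"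
    by simp
  then have "l * (ln m - ln l) / ln 2 \<le> (m - l) / ln 2"
    by (simp add: divide_right_mono)
  then show ?thesis
    by (simp add: log_def field_simps)
qed

text \<open>Gibbs' inequality against the distribution (A, B, A, B), followed by the observation that
  the resulting cross entropy grows with the weight m1 + m2 placed on the smaller value B.\<close>
lemma entropy4_le_of_small_weight:
  fixes l1 m1 l2 m2 A B :: real
  assumes nonneg: "0 \<le> l1" "0 \<le> m1" "0 \<le> l2" "0 \<le> m2"
    and total: "l1 + m1 + l2 + m2 = 1" and small: "m1 + m2 \<le> 2 * B"
    and "0 < B" "B \<le> A" and AB: "A + B = 1/2"
  shows "- (l1 * log 2 l1 + m1 * log 2 m1 + l2 * log 2 l2 + m2 * log 2 m2)
    \<le> - (2 * (A * log 2 A) + 2 * (B * log 2 B))"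
proof -
  have A: "0 < A" using assms by linarith
  have "(A - l1) / ln 2 + (B - m1) / ln 2 + (A - l2) / ln 2 + (B - m2) / ln 2
      = (2 * (A + B) - (l1 + m1 + l2 + m2)) / ln 2"
    by (simp add: field_simps)
  then have slack: "(A - l1) / ln 2 + (B - m1) / ln 2 + (A - l2) / ln 2 + (B - m2) / ln 2 = 0"
    using AB total by simp
  have "- (l1 * log 2 l1 + m1 * log 2 m1 + l2 * log 2 l2 + m2 * log 2 m2)
      \<le> - ((l1 + l2) * log 2 A + (m1 + m2) * log 2 B)"
    using neg_mult_log_le_cross_entropy[OF nonneg(1) A] neg_mult_log_le_cross_entropy[OF nonneg(2) \<open>0 < B\<close>]
      neg_mult_log_le_cross_entropy[OF nonneg(3) A] neg_mult_log_le_cross_entropy[OF nonneg(4) \<open>0 < B\<close>]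
      slack
    by (simp add: distrib_right)
  also have "\<dots> = - log 2 A + (m1 + m2) * (log 2 A - log 2 B)"
  proof -
    have "l1 + l2 = 1 - (m1 + m2)"
      using total by linarith
    then show ?thesis
      by (simp only:) (simp add: algebra_simps)
  qed
  also have "\<dots> \<le> - log 2 A + 2 * B * (log 2 A - log 2 B)"
    using small assms by (intro add_left_mono mult_right_mono) simp_all
  also have "\<dots> = - ((1 - 2 * B) * log 2 A) - 2 * B * log 2 B"
    by (simp add: algebra_simps)
  also have "1 - 2 * B = 2 * A"
    using AB by simp
  also have "- (2 * A * log 2 A) - 2 * B * log 2 B = - (2 * (A * log 2 A) + 2 * (B * log 2 B))"
    by simp
  finally show ?thesis .
qed

lemma abs_mult_add_abs_mult_le_one:
  fixes a b c d :: real
  assumes "a\<^sup>2 + b\<^sup>2 = 1" "c\<^sup>2 + d\<^sup>2 = 1"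
  shows "\<bar>a * c\<bar> + \<bar>b * d\<bar> \<le> 1"
proof -
  have "2 * (\<bar>a * d\<bar> * \<bar>b * c\<bar>) \<le> \<bar>a * d\<bar>\<^sup>2 + \<bar>b * c\<bar>\<^sup>2"
    using sum_squares_bound[of "\<bar>a * d\<bar>" "\<bar>b * c\<bar>"] by (simp add: power2_eq_square)
  then have "(\<bar>a * c\<bar> + \<bar>b * d\<bar>)\<^sup>2 \<le> (a\<^sup>2 + b\<^sup>2) * (c\<^sup>2 + d\<^sup>2)"
    by (simp add: power2_sum abs_mult power_mult_distrib algebra_simps)
  then have "(\<bar>a * c\<bar> + \<bar>b * d\<bar>)\<^sup>2 \<le> 1\<^sup>2"
    using assms by simp
  then show ?thesis
    by (rule power2_le_imp_le) simp
qed

text \<open>The lower bound comes from the identity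
  (1 + t w)^2 - (1 - |w|)^2 (1 - e^2) - ((1 - |w|) e + |w| + t w)^2 = 2 (1 - |w|) (1 - e) (|w| + t w)
  with e = 1 - t^2, whose right-hand side is nonnegative.\<close>
lemma discriminant_lower_bound:
  fixes t u w :: real
  assumes uw: "\<bar>u\<bar> + \<bar>w\<bar> \<le> 1" and t: "t\<^sup>2 \<le> 1"
  defines "D \<equiv> u\<^sup>2 * t\<^sup>2 * (2 - t\<^sup>2) / 16"
  shows "0 \<le> ((1 + t * w) / 2)\<^sup>2 - 4 * D"
    and "((1 - \<bar>w\<bar>) * (1 - t\<^sup>2) + \<bar>w\<bar> + t * w) / 2 \<le> sqrt (((1 + t * w) / 2)\<^sup>2 - 4 * D)"
proof -
  define e where "e = 1 - t\<^sup>2"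
  define L where "L = (1 - \<bar>w\<bar>) * e + \<bar>w\<bar> + t * w"
  have e: "0 \<le> e" "e \<le> 1" using t unfolding e_def by auto
  have tw: "\<bar>t * w\<bar> \<le> \<bar>w\<bar>"
    using t by (simp add: abs_mult abs_square_le_1 mult_left_le_one_le)
  have "\<bar>u\<bar>\<^sup>2 \<le> (1 - \<bar>w\<bar>)\<^sup>2"
    using uw by (intro power_mono) simp_all
  moreover have "0 \<le> t\<^sup>2 * (2 - t\<^sup>2)"
    using t by simp
  ultimately have "u\<^sup>2 * (t\<^sup>2 * (2 - t\<^sup>2)) \<le> (1 - \<bar>w\<bar>)\<^sup>2 * (t\<^sup>2 * (2 - t\<^sup>2))"
    by (intro mult_right_mono) simp_all
  moreover have "1 - e\<^sup>2 = t\<^sup>2 * (2 - t\<^sup>2)"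
    unfolding e_def by (simp add: power2_eq_square algebra_simps)
  ultimately have "16 * D \<le> (1 - \<bar>w\<bar>)\<^sup>2 * (1 - e\<^sup>2)"
    unfolding D_def by simp
  moreover have "(1 + t * w)\<^sup>2 - (1 - \<bar>w\<bar>)\<^sup>2 * (1 - e\<^sup>2) - L\<^sup>2 = 2 * (1 - \<bar>w\<bar>) * (1 - e) * (\<bar>w\<bar> + t * w)"
    unfolding L_def e_def by (simp add: power2_eq_square algebra_simps)
  moreover have "0 \<le> 2 * (1 - \<bar>w\<bar>) * (1 - e) * (\<bar>w\<bar> + t * w)"
    using uw e tw by (intro mult_nonneg_nonneg) auto
  ultimately have disc: "(L / 2)\<^sup>2 \<le> ((1 + t * w) / 2)\<^sup>2 - 4 * D"
    by (simp add: power_divide)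
  then show "0 \<le> ((1 + t * w) / 2)\<^sup>2 - 4 * D"
    by (meson order_trans zero_le_power2)
  from disc show "((1 - \<bar>w\<bar>) * (1 - t\<^sup>2) + \<bar>w\<bar> + t * w) / 2 \<le> sqrt (((1 + t * w) / 2)\<^sup>2 - 4 * D)"
    unfolding L_def e_def by (rule real_le_rsqrt)
qed

lemma entropy_two_quadratics_le:
  fixes t u w :: real
  assumes uw: "\<bar>u\<bar> + \<bar>w\<bar> \<le> 1" and t: "0 < t" "t \<le> 1"
  defines "D \<equiv> u\<^sup>2 * t\<^sup>2 * (2 - t\<^sup>2) / 16"
    and "T1 \<equiv> (1 + t * w) / 2" and "T2 \<equiv> (1 - t * w) / 2"
  shows "- (quad_root_plus T1 D * log 2 (quad_root_plus T1 D) + quad_root_minus T1 D * log 2 (quad_root_minus T1 D)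
       + quad_root_plus T2 D * log 2 (quad_root_plus T2 D) + quad_root_minus T2 D * log 2 (quad_root_minus T2 D))
    \<le> - (2 * ((2 - t\<^sup>2) / 4 * log 2 ((2 - t\<^sup>2) / 4)) + 2 * (t\<^sup>2 / 4 * log 2 (t\<^sup>2 / 4)))"
proof -
  have t2: "t\<^sup>2 \<le> 1"
    using t by (simp add: power_le_one)
  note disc1 = discriminant_lower_bound[OF uw t2, folded D_def T1_def]
  have "(- t)\<^sup>2 \<le> 1"
    using t2 by simp
  from discriminant_lower_bound[OF uw this]
  have disc2: "0 \<le> T2\<^sup>2 - 4 * D"
    "((1 - \<bar>w\<bar>) * (1 - t\<^sup>2) + \<bar>w\<bar> - t * w) / 2 \<le> sqrt (T2\<^sup>2 - 4 * D)"
    unfolding D_def T2_def by simp_all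
  have "\<bar>t * w\<bar> \<le> 1"
    using uw t by (simp add: abs_mult mult_le_one)
  then have T: "0 \<le> T1" "0 \<le> T2"
    unfolding T1_def T2_def by auto
  have "0 \<le> D"
    using t2 unfolding D_def by simp
  note roots1 = quad_roots_nonneg[OF \<open>0 \<le> D\<close> T(1) disc1(1)]
  note roots2 = quad_roots_nonneg[OF \<open>0 \<le> D\<close> T(2) disc2(1)]
  have total: "quad_root_plus T1 D + quad_root_minus T1 D + quad_root_plus T2 D + quad_root_minus T2 D = 1"
    unfolding quad_root_plus_def quad_root_minus_def T1_def T2_def by (simp add: field_simps)
  have "quad_root_minus T1 D + quad_root_minus T2 D = (1 - sqrt (T1\<^sup>2 - 4 * D) - sqrt (T2\<^sup>2 - 4 * D)) / 2"
    unfolding quad_root_minus_def T1_def T2_def by (simp add: field_simps)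
  also have "\<dots> \<le> (1 - (1 - \<bar>w\<bar>) * (1 - t\<^sup>2) - \<bar>w\<bar>) / 2"
    using disc1(2) disc2(2) by simp
  also have "\<dots> \<le> 2 * (t\<^sup>2 / 4)"
    using uw t2 by (simp add: algebra_simps mult_left_le_one_le)
  finally have small: "quad_root_minus T1 D + quad_root_minus T2 D \<le> 2 * (t\<^sup>2 / 4)" .
  show ?thesis
    by (rule entropy4_le_of_small_weight[OF roots1(2,1) roots2(2,1) total small])
      (use t t2 in \<open>simp_all add: field_simps\<close>)
qed

lemma Uent_eq:
  "Uent x y z 0 0 0 0 = coef x y z 0 + coef x y z 3"
  "Uent x y z 1 1 1 1 = coef x y z 0 + coef x y z 3"
  "Uent x y z 0 1 0 1 = coef x y z 0 - coef x y z 3"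
  "Uent x y z 1 0 1 0 = coef x y z 0 - coef x y z 3"
  "Uent x y z 1 1 0 0 = coef x y z 1 - coef x y z 2"
  "Uent x y z 0 0 1 1 = coef x y z 1 - coef x y z 2"
  "Uent x y z 1 0 0 1 = coef x y z 1 + coef x y z 2"
  "Uent x y z 0 1 1 0 = coef x y z 1 + coef x y z 2"
  "Uent x y z 0 0 0 1 = 0" "Uent x y z 0 0 1 0 = 0"
  "Uent x y z 1 1 0 1 = 0" "Uent x y z 1 1 1 0 = 0"
  "Uent x y z 0 1 0 0 = 0" "Uent x y z 0 1 1 1 = 0"
  "Uent x y z 1 0 0 0 = 0" "Uent x y z 1 0 1 1 = 0"
  by (simp_all add: Uent_def sum_lessThan_4 pauli_def mult.assoc)

lemma chi_eq:
  assumes "ra < 2" "rb < 2"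
  shows "chi x y z \<alpha> \<beta> a ra b rb = Uent x y z a b ra rb *
    complex_of_real (if ra = 0 then cos \<alpha> else sin \<alpha>) * complex_of_real (if rb = 0 then cos \<beta> else sin \<beta>)"
  using assms unfolding chi_def
  by (cases ra; cases rb) (simp_all add: sum_lessThan_2 pstate_def less_2_cases_iff)

lemma rhoBR_carrier_mat: "rhoBR x y z \<alpha> \<beta> \<in> carrier_mat 4 4"
  by (simp add: rhoBR_def)

lemma rhoBR_zero_entries:
  "rhoBR x y z \<alpha> \<beta> $$ (0,1) = 0" "rhoBR x y z \<alpha> \<beta> $$ (0,2) = 0"
  "rhoBR x y z \<alpha> \<beta> $$ (1,0) = 0" "rhoBR x y z \<alpha> \<beta> $$ (2,0) = 0"
  "rhoBR x y z \<alpha> \<beta> $$ (1,3) = 0" "rhoBR x y z \<alpha> \<beta> $$ (3,1) = 0"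
  "rhoBR x y z \<alpha> \<beta> $$ (2,3) = 0" "rhoBR x y z \<alpha> \<beta> $$ (3,2) = 0"
  by (simp_all add: rhoBR_def sum_lessThan_2 chi_eq Uent_eq[unfolded One_nat_def])

lemma rhoBR_block_entries:
  fixes x y z \<alpha> \<beta> :: real
  defines "P \<equiv> coef x y z 0 + coef x y z 3" and "R \<equiv> coef x y z 0 - coef x y z 3"
    and "Q \<equiv> coef x y z 1 - coef x y z 2" and "S \<equiv> coef x y z 1 + coef x y z 2"
    and "ca \<equiv> complex_of_real (cos \<alpha>)" and "sa \<equiv> complex_of_real (sin \<alpha>)"
    and "cb \<equiv> complex_of_real (cos \<beta>)" and "sb \<equiv> complex_of_real (sin \<beta>)"
  shows "rhoBR x y z \<alpha> \<beta> $$ (0,0) = (P*ca*cb) * (cnj P*ca*cb) + (R*sa*cb) * (cnj R*sa*cb)"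
    "rhoBR x y z \<alpha> \<beta> $$ (3,3) = (R*ca*sb) * (cnj R*ca*sb) + (P*sa*sb) * (cnj P*sa*sb)"
    "rhoBR x y z \<alpha> \<beta> $$ (0,3) = (P*ca*cb) * (cnj R*ca*sb) + (R*sa*cb) * (cnj P*sa*sb)"
    "rhoBR x y z \<alpha> \<beta> $$ (3,0) = (R*ca*sb) * (cnj P*ca*cb) + (P*sa*sb) * (cnj R*sa*cb)"
    "rhoBR x y z \<alpha> \<beta> $$ (1,1) = (Q*sa*sb) * (cnj Q*sa*sb) + (S*ca*sb) * (cnj S*ca*sb)"
    "rhoBR x y z \<alpha> \<beta> $$ (2,2) = (S*sa*cb) * (cnj S*sa*cb) + (Q*ca*cb) * (cnj Q*ca*cb)"
    "rhoBR x y z \<alpha> \<beta> $$ (1,2) = (Q*sa*sb) * (cnj S*sa*cb) + (S*ca*sb) * (cnj Q*ca*cb)"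
    "rhoBR x y z \<alpha> \<beta> $$ (2,1) = (S*sa*cb) * (cnj Q*sa*sb) + (Q*ca*cb) * (cnj S*ca*sb)"
  unfolding assms
  by (simp_all add: rhoBR_def sum_lessThan_2 chi_eq Uent_eq[unfolded One_nat_def])

text \<open>Both diagonal blocks of rhoBR have this shape: the block {1,2} arises from the block {0,3}
  by exchanging cos and sin of both angles and replacing (P, R) by (Q, S).\<close>
lemma block_trace_det:
  fixes P P' R R' a b c d :: "'a::comm_ring_1"
  defines "f00 \<equiv> (P*a*c) * (P'*a*c) + (R*b*c) * (R'*b*c)" and "f33 \<equiv> (R*a*d) * (R'*a*d) + (P*b*d) * (P'*b*d)"
    and "f03 \<equiv> (P*a*c) * (R'*a*d) + (R*b*c) * (P'*b*d)" and "f30 \<equiv> (R*a*d) * (P'*a*c) + (P*b*d) * (R'*b*c)"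
  shows "f00 + f33 = (a\<^sup>2 * c\<^sup>2 + b\<^sup>2 * d\<^sup>2) * (P * P') + (b\<^sup>2 * c\<^sup>2 + a\<^sup>2 * d\<^sup>2) * (R * R')"
    and "f00 * f33 - f03 * f30 = (a * b * c * d)\<^sup>2 * ((P\<^sup>2 - R\<^sup>2) * (P'\<^sup>2 - R'\<^sup>2))"
  unfolding assms by (simp_all add: algebra_simps power2_eq_square)

lemma char_poly_rhoBR:
  fixes x y z \<alpha> \<beta> :: real
  defines "P \<equiv> coef x y z 0 + coef x y z 3" and "R \<equiv> coef x y z 0 - coef x y z 3"
    and "Q \<equiv> coef x y z 1 - coef x y z 2" and "S \<equiv> coef x y z 1 + coef x y z 2"
  defines "T1 \<equiv> ((cos \<alpha>)\<^sup>2 * (cos \<beta>)\<^sup>2 + (sin \<alpha>)\<^sup>2 * (sin \<beta>)\<^sup>2) * (cmod P)\<^sup>2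
      + ((sin \<alpha>)\<^sup>2 * (cos \<beta>)\<^sup>2 + (cos \<alpha>)\<^sup>2 * (sin \<beta>)\<^sup>2) * (cmod R)\<^sup>2"
    and "T2 \<equiv> ((cos \<alpha>)\<^sup>2 * (cos \<beta>)\<^sup>2 + (sin \<alpha>)\<^sup>2 * (sin \<beta>)\<^sup>2) * (cmod Q)\<^sup>2
      + ((sin \<alpha>)\<^sup>2 * (cos \<beta>)\<^sup>2 + (cos \<alpha>)\<^sup>2 * (sin \<beta>)\<^sup>2) * (cmod S)\<^sup>2"
    and "D1 \<equiv> (cos \<alpha> * sin \<alpha> * cos \<beta> * sin \<beta>)\<^sup>2 * (cmod (P\<^sup>2 - R\<^sup>2))\<^sup>2"
    and "D2 \<equiv> (cos \<alpha> * sin \<alpha> * cos \<beta> * sin \<beta>)\<^sup>2 * (cmod (Q\<^sup>2 - S\<^sup>2))\<^sup>2"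
  shows "char_poly (rhoBR x y z \<alpha> \<beta>) =
    [:complex_of_real D1, - complex_of_real T1, 1:] * [:complex_of_real D2, - complex_of_real T2, 1:]"
proof -
  let ?ca = "complex_of_real (cos \<alpha>)" and ?sa = "complex_of_real (sin \<alpha>)"
    and ?cb = "complex_of_real (cos \<beta>)" and ?sb = "complex_of_real (sin \<beta>)"
  note entries = rhoBR_block_entries[of x y z \<alpha> \<beta>, folded P_def R_def Q_def S_def]
  have norm: "u * cnj u = complex_of_real ((cmod u)\<^sup>2)" for u :: complex
    by (rule complex_norm_square[symmetric])
  have norm_diff: "(u\<^sup>2 - v\<^sup>2) * (cnj u ^ 2 - cnj v ^ 2) = complex_of_real ((cmod (u\<^sup>2 - v\<^sup>2))\<^sup>2)" for u v :: complex
    unfolding complex_norm_square by simp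
  note block1 = block_trace_det[where P = P and P' = "cnj P" and R = R and R' = "cnj R"
      and a = ?ca and b = ?sa and c = ?cb and d = ?sb]
  note block2 = block_trace_det[where P = Q and P' = "cnj Q" and R = S and R' = "cnj S"
      and a = ?sa and b = ?ca and c = ?sb and d = ?cb]
  show ?thesis
    unfolding char_poly_mat4_two_blocks[OF rhoBR_carrier_mat rhoBR_zero_entries] entries
      block1 block2 norm norm_diff T1_def T2_def D1_def D2_def
    by (simp add: ac_simps)
qed

lemma coef_pi4_diag_norms:
  fixes y :: real
  defines "t \<equiv> sin (2 * y)" and "c \<equiv> coef (pi/4) y y"
  shows "(cmod (c 0 + c 3))\<^sup>2 = (1 + t) / 2" "(cmod (c 0 - c 3))\<^sup>2 = (1 - t) / 2"
    "(cmod (c 1 - c 2))\<^sup>2 = (1 - t) / 2" "(cmod (c 1 + c 2))\<^sup>2 = (1 + t) / 2"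
    "(cmod ((c 0 + c 3)\<^sup>2 - (c 0 - c 3)\<^sup>2))\<^sup>2 = t\<^sup>2 * (2 - t\<^sup>2)"
    "(cmod ((c 1 - c 2)\<^sup>2 - (c 1 + c 2)\<^sup>2))\<^sup>2 = t\<^sup>2 * (2 - t\<^sup>2)"
    "(cmod (c 0))\<^sup>2 = (2 - t\<^sup>2) / 4" "(cmod (c 2))\<^sup>2 = t\<^sup>2 / 4"
proof -
  define h where "h = sqrt 2 / 2"
  define C where "C = cos y"
  define S where "S = sin y"
  have h: "h\<^sup>2 = 1/2"
    unfolding h_def by (simp add: power_divide)
  have pyth: "C\<^sup>2 + S\<^sup>2 = 1"
    unfolding C_def S_def by simp
  have t: "t = 2 * C * S"
    unfolding t_def C_def S_def sin_double by simp
  have c: "c 0 = Complex (h * C\<^sup>2) (h * S\<^sup>2)" "c 1 = Complex (h * S\<^sup>2) (h * C\<^sup>2)"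
    "c 2 = Complex (h * C * S) (h * C * S)" "c 3 = Complex (h * C * S) (h * C * S)"
    by (simp_all add: c_def coef_def cos_45 sin_45 h_def C_def S_def power2_eq_square)
  have "(cmod (c 0 + c 3))\<^sup>2 = h\<^sup>2 * ((C\<^sup>2 + S\<^sup>2) * (C\<^sup>2 + S\<^sup>2 + 2 * C * S))"
    "(cmod (c 1 + c 2))\<^sup>2 = h\<^sup>2 * ((C\<^sup>2 + S\<^sup>2) * (C\<^sup>2 + S\<^sup>2 + 2 * C * S))"
    "(cmod (c 0 - c 3))\<^sup>2 = h\<^sup>2 * ((C\<^sup>2 + S\<^sup>2) * (C\<^sup>2 + S\<^sup>2 - 2 * C * S))"
    "(cmod (c 1 - c 2))\<^sup>2 = h\<^sup>2 * ((C\<^sup>2 + S\<^sup>2) * (C\<^sup>2 + S\<^sup>2 - 2 * C * S))"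
    unfolding cmod_power2 c by (simp_all add: power2_eq_square algebra_simps)
  then show "(cmod (c 0 + c 3))\<^sup>2 = (1 + t) / 2" "(cmod (c 0 - c 3))\<^sup>2 = (1 - t) / 2"
    "(cmod (c 1 - c 2))\<^sup>2 = (1 - t) / 2" "(cmod (c 1 + c 2))\<^sup>2 = (1 + t) / 2"
    unfolding h pyth t by simp_all
  have "(cmod (c 0))\<^sup>2 = h\<^sup>2 * ((C\<^sup>2 + S\<^sup>2)\<^sup>2 - 2 * C\<^sup>2 * S\<^sup>2)" "(cmod (c 1))\<^sup>2 = (cmod (c 0))\<^sup>2"
    "(cmod (c 2))\<^sup>2 = h\<^sup>2 * (2 * C\<^sup>2 * S\<^sup>2)" "(cmod (c 3))\<^sup>2 = (cmod (c 2))\<^sup>2"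
    unfolding cmod_power2 c by (simp_all add: power2_eq_square algebra_simps)
  then have norms: "(cmod (c 0))\<^sup>2 = (2 - t\<^sup>2) / 4" "(cmod (c 1))\<^sup>2 = (2 - t\<^sup>2) / 4"
    "(cmod (c 2))\<^sup>2 = t\<^sup>2 / 4" "(cmod (c 3))\<^sup>2 = t\<^sup>2 / 4"
    unfolding h pyth t by (simp_all add: power_mult_distrib)
  then show "(cmod (c 0))\<^sup>2 = (2 - t\<^sup>2) / 4" "(cmod (c 2))\<^sup>2 = t\<^sup>2 / 4"
    by simp_all
  have "(c 0 + c 3)\<^sup>2 - (c 0 - c 3)\<^sup>2 = 4 * (c 0 * c 3)" "(c 1 - c 2)\<^sup>2 - (c 1 + c 2)\<^sup>2 = - 4 * (c 1 * c 2)"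
    by (simp_all add: power2_eq_square algebra_simps)
  then show "(cmod ((c 0 + c 3)\<^sup>2 - (c 0 - c 3)\<^sup>2))\<^sup>2 = t\<^sup>2 * (2 - t\<^sup>2)"
    "(cmod ((c 1 - c 2)\<^sup>2 - (c 1 + c 2)\<^sup>2))\<^sup>2 = t\<^sup>2 * (2 - t\<^sup>2)"
    by (simp_all add: norm_mult power_mult_distrib norms[unfolded One_nat_def])
qed

lemma ent_pi4_diag:
  fixes y \<alpha> \<beta> :: real
  defines "t \<equiv> sin (2 * y)" and "u \<equiv> sin (2 * \<alpha>) * sin (2 * \<beta>)" and "w \<equiv> cos (2 * \<alpha>) * cos (2 * \<beta>)"
  defines "D \<equiv> u\<^sup>2 * t\<^sup>2 * (2 - t\<^sup>2) / 16"
    and "T1 \<equiv> (1 + t * w) / 2" and "T2 \<equiv> (1 - t * w) / 2"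
  shows "ent (pi/4) y y \<alpha> \<beta> =
    - (quad_root_plus T1 D * log 2 (quad_root_plus T1 D) + quad_root_minus T1 D * log 2 (quad_root_minus T1 D)
     + quad_root_plus T2 D * log 2 (quad_root_plus T2 D) + quad_root_minus T2 D * log 2 (quad_root_minus T2 D))"
proof -
  note norms = coef_pi4_diag_norms[of y, folded t_def]
  define p where "p = (cos \<alpha>)\<^sup>2 * (cos \<beta>)\<^sup>2 + (sin \<alpha>)\<^sup>2 * (sin \<beta>)\<^sup>2"
  define q where "q = (sin \<alpha>)\<^sup>2 * (cos \<beta>)\<^sup>2 + (cos \<alpha>)\<^sup>2 * (sin \<beta>)\<^sup>2"
  have "p + q = ((cos \<alpha>)\<^sup>2 + (sin \<alpha>)\<^sup>2) * ((cos \<beta>)\<^sup>2 + (sin \<beta>)\<^sup>2)"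
    unfolding p_def q_def by (simp only: algebra_simps)
  then have "p + q = 1"
    by simp
  moreover have "p - q = w"
    unfolding p_def q_def w_def cos_double by (simp add: algebra_simps)
  moreover have "p * ((1 + t) / 2) + q * ((1 - t) / 2) = ((p + q) + t * (p - q)) / 2"
    and "p * ((1 - t) / 2) + q * ((1 + t) / 2) = ((p + q) - t * (p - q)) / 2"
    by (simp_all add: field_simps)
  ultimately have "p * ((1 + t) / 2) + q * ((1 - t) / 2) = T1" "p * ((1 - t) / 2) + q * ((1 + t) / 2) = T2"
    unfolding T1_def T2_def by simp_all
  moreover have "(cos \<alpha> * sin \<alpha> * cos \<beta> * sin \<beta>)\<^sup>2 * (t\<^sup>2 * (2 - t\<^sup>2)) = D"
    unfolding D_def u_def sin_double by (simp add: power_mult_distrib)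
  ultimately have "char_poly (rhoBR (pi/4) y y \<alpha> \<beta>) =
      [:complex_of_real D, - complex_of_real T1, 1:] * [:complex_of_real D, - complex_of_real T2, 1:]"
    unfolding char_poly_rhoBR norms p_def[symmetric] q_def[symmetric] by simp
  moreover have uw: "\<bar>u\<bar> + \<bar>w\<bar> \<le> 1"
    unfolding u_def w_def by (rule abs_mult_add_abs_mult_le_one) simp_all
  have "t\<^sup>2 \<le> 1" "(- t)\<^sup>2 \<le> 1"
    unfolding t_def by (simp_all add: abs_square_le_1)
  then have "0 \<le> T1\<^sup>2 - 4 * D" "0 \<le> T2\<^sup>2 - 4 * D"
    using discriminant_lower_bound(1)[OF uw] unfolding T1_def T2_def D_def by fastforce+
  ultimately show ?thesis
    unfolding ent_def by (rule vn_entropy_two_quadratic_factors)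
qed

theorem proposition3:
  fixes x y z :: real
  assumes "normalized x y z" and "x = pi/4" and "y = z"
  shows "(\<forall>\<alpha>\<in>{0..pi/4}. \<forall>\<beta>\<in>{0..pi/2}. ent x y z \<alpha> \<beta> \<le> ent x y z (pi/4) (pi/4))
    \<and> ent x y z (pi/4) (pi/4) =
        shannon [(cmod (coef x y z 0))\<^sup>2, (cmod (coef x y z 0))\<^sup>2,
                 (cmod (coef x y z 2))\<^sup>2, (cmod (coef x y z 2))\<^sup>2]"
proof -
  define t where "t = sin (2 * y)"
  define A where "A = (2 - t\<^sup>2) / 4"
  define B where "B = t\<^sup>2 / 4"
  have "0 < y" "y < pi/4"
    using assms(1) unfolding normalized_def by auto
  then have t: "0 < t" "t \<le> 1"
    unfolding t_def by (auto intro: sin_gt_zero)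
  have bound: "ent (pi/4) y y \<alpha> \<beta> \<le> - (2 * (A * log 2 A) + 2 * (B * log 2 B))" for \<alpha> \<beta>
    unfolding ent_pi4_diag A_def B_def t_def[symmetric]
    by (rule entropy_two_quadratics_le[OF abs_mult_add_abs_mult_le_one t]) simp_all
  have "B \<le> A" "A + B = 1/2" "t\<^sup>2 * (2 - t\<^sup>2) / 16 = A * B"
    using t unfolding A_def B_def by (simp_all add: power_le_one field_simps)
  then have attained: "ent (pi/4) y y (pi/4) (pi/4) = - (2 * (A * log 2 A) + 2 * (B * log 2 B))"
    unfolding ent_pi4_diag t_def[symmetric] by (simp flip: \<open>A + B = 1/2\<close> add: quad_roots_sum_prod)
  have "shannon [(cmod (coef (pi/4) y y 0))\<^sup>2, (cmod (coef (pi/4) y y 0))\<^sup>2,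
      (cmod (coef (pi/4) y y 2))\<^sup>2, (cmod (coef (pi/4) y y 2))\<^sup>2] = - (2 * (A * log 2 A) + 2 * (B * log 2 B))"
    unfolding shannon_def coef_pi4_diag_norms A_def B_def t_def by simp
  with bound attained show ?thesis
    unfolding assms(2) assms(3)[symmetric] by simp
qed

end
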